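(* Let $r,k,s_1,\dots,s_k$ be nonnegative integers, $\Gamma$ the complete bipartite supernova quiver with these parameters, and $\boldsymbol\mu=(\mu^1,\dots,\mu^k)$ a $k$-tuple of nonzero partitions with $\mu^i=(\mu^i_1\ge\cdots\ge\mu^i_{s_i+1}\ge0)$. If $\mathbf{v}_{\boldsymbol\mu}$ is an imaginary root of $\Gamma$, then $r\geq|\mu^i|$ for all $i=1,\dots,k$.
   Context: $\Gamma$ has vertex set $I$ consisting of $(l)$, $l=1,\dots,r$, and $(i;j)$, $i=1,\dots,k$, $j=0,\dots,s_i$; edges: one between $(l)$ and $(i;0)$ for every $l,i$ and one between $(i;j)$ and $(i;j-1)$ for $1\le j\le s_i$. $\mathbf{v}_{\boldsymbol\mu}$: $v_{(l)}=1$, $v_{(i;0)}=|\mu^i|$, $v_{(i;j)}=|\mu^i|-\sum_{f=1}^j\mu^i_f$. Bilinear form: $(\mathbf{e}_a,\mathbf{e}_a)=2$, $(\mathbf{e}_a,\mathbf{e}_b)=-$(number of edges joining $a,b$) for $a\ne b$; Weyl group $W$ generated by $s_a(\lambda)=\lambda-(\lambda,\mathbf{e}_a)\mathbf{e}_a$. Imaginary roots are the vectors $\pm w(\delta)$ with $w\in W$ and $\delta$ a nonzero vector in $\mathbb{Z}_{\ge0}^I$ with connected support satisfying $(\mathbf{e}_a,\delta)\le0$ for all $a$. *)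

theory Defs
  imports Main
begin

text \<open>Vertices of the complete bipartite supernova quiver: Lv l is (l), Av i j is (i;j).\<close>
datatype vert = Lv nat | Av nat nat

type_synonym vec = "vert \<Rightarrow> int"

definition verts :: "nat \<Rightarrow> nat \<Rightarrow> (nat \<Rightarrow> nat) \<Rightarrow> vert set" where
  "verts r k s = {Lv l | l. 1 \<le> l \<and> l \<le> r} \<union> {Av i j | i j. 1 \<le> i \<and> i \<le> k \<and> j \<le> s i}"

fun nedges :: "vert \<Rightarrow> vert \<Rightarrow> int" where
  "nedges (Lv l) (Av i j) = (if j = 0 then 1 else 0)"
| "nedges (Av i j) (Lv l) = (if j = 0 then 1 else 0)"
| "nedges (Lv l) (Lv l') = 0"
| "nedges (Av i j) (Av i' j') = (if i = i' \<and> (j = Suc j' \<or> j' = Suc j) then 1 else 0)"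

definition cartan :: "vert \<Rightarrow> vert \<Rightarrow> int" where
  "cartan a b = (if a = b then 2 else - nedges a b)"

definition bform :: "nat \<Rightarrow> nat \<Rightarrow> (nat \<Rightarrow> nat) \<Rightarrow> vec \<Rightarrow> vec \<Rightarrow> int" where
  "bform r k s x y = (\<Sum>a\<in>verts r k s. \<Sum>b\<in>verts r k s. x a * y b * cartan a b)"

definition evec :: "vert \<Rightarrow> vec" where
  "evec a = (\<lambda>b. if b = a then 1 else 0)"

definition sref :: "nat \<Rightarrow> nat \<Rightarrow> (nat \<Rightarrow> nat) \<Rightarrow> vert \<Rightarrow> vec \<Rightarrow> vec" where
  "sref r k s a x = (\<lambda>b. x b - bform r k s x (evec a) * evec a b)"

inductive weyl :: "nat \<Rightarrow> nat \<Rightarrow> (nat \<Rightarrow> nat) \<Rightarrow> (vec \<Rightarrow> vec) \<Rightarrow> bool"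
  for r k s where
  weyl_id: "weyl r k s id"
| weyl_step: "weyl r k s w \<Longrightarrow> a \<in> verts r k s \<Longrightarrow> weyl r k s (sref r k s a \<circ> w)"

definition supp :: "vec \<Rightarrow> vert set" where
  "supp x = {a. x a \<noteq> 0}"

definition connected_supp :: "vec \<Rightarrow> bool" where
  "connected_supp x = (\<forall>a\<in>supp x. \<forall>b\<in>supp x.
     (a, b) \<in> ({(c, d). c \<in> supp x \<and> d \<in> supp x \<and> c \<noteq> d \<and> nedges c d \<noteq> 0})\<^sup>*)"

definition fund_imag :: "nat \<Rightarrow> nat \<Rightarrow> (nat \<Rightarrow> nat) \<Rightarrow> vec \<Rightarrow> bool" where
  "fund_imag r k s \<delta> = ((\<forall>a. a \<notin> verts r k s \<longrightarrow> \<delta> a = 0) \<and> (\<forall>a. \<delta> a \<ge> 0) \<and> \<delta> \<noteq> (\<lambda>_. 0)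
      \<and> connected_supp \<delta> \<and> (\<forall>a\<in>verts r k s. bform r k s (evec a) \<delta> \<le> 0))"

definition imaginary_root :: "nat \<Rightarrow> nat \<Rightarrow> (nat \<Rightarrow> nat) \<Rightarrow> vec \<Rightarrow> bool" where
  "imaginary_root r k s v = (\<exists>w \<delta>. weyl r k s w \<and> fund_imag r k s \<delta> \<and> (v = w \<delta> \<or> v = (\<lambda>a. - w \<delta> a)))"

text \<open>mu i f = \<mu>^i_f, for 1 \<le> i \<le> k, 1 \<le> f \<le> s_i+1.\<close>
definition psize :: "(nat \<Rightarrow> nat \<Rightarrow> nat) \<Rightarrow> (nat \<Rightarrow> nat) \<Rightarrow> nat \<Rightarrow> nat" where
  "psize mu s i = (\<Sum>f=1..s i + 1. mu i f)"

definition is_partition_tuple :: "nat \<Rightarrow> (nat \<Rightarrow> nat) \<Rightarrow> (nat \<Rightarrow> nat \<Rightarrow> nat) \<Rightarrow> bool" where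
  "is_partition_tuple k s mu = (\<forall>i. 1 \<le> i \<and> i \<le> k \<longrightarrow>
      (\<forall>f g. 1 \<le> f \<and> f \<le> g \<and> g \<le> s i + 1 \<longrightarrow> mu i g \<le> mu i f) \<and> psize mu s i \<noteq> 0)"

definition vmu :: "nat \<Rightarrow> nat \<Rightarrow> (nat \<Rightarrow> nat) \<Rightarrow> (nat \<Rightarrow> nat \<Rightarrow> nat) \<Rightarrow> vec" where
  "vmu r k s mu = (\<lambda>a. if a \<notin> verts r k s then 0 else
     (case a of Lv l \<Rightarrow> 1
      | Av i j \<Rightarrow> int (psize mu s i) - (\<Sum>f=1..j. int (mu i f))))"

end

theory Submission
  imports Defs
begin

text \<open>
  Kac's positivity argument: if \<open>\<delta>\<close> has nonnegative entries and \<open>(e_a, \<delta>) \<le> 0\<close> for all \<open>a\<close>,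
  then \<open>w(\<delta>) \<ge> 0\<close> for every \<open>w \<in> W\<close>. By induction on the length, \<open>w = w' s_b\<close> with
  \<open>w(\<delta>) = w'(\<delta>) - (\<delta>, e_b) w'(e_b)\<close>, and \<open>w'(e_b) \<ge> 0\<close> because \<open>l(w' s_b) > l(w')\<close>;
  the latter is the usual exchange argument, reduced to the dihedral subgroup generated by
  two reflections. Consequently all \<open>W\<close>-translates of an imaginary root have one sign.

  Now \<open>v_\<mu>\<close> has the entry \<open>|\<mu>^i|\<close> at \<open>(i;0)\<close>, so if \<open>|\<mu>^i| > 0\<close> all translates are
  nonnegative. But reflecting successively at \<open>(i;0), \<dots>, (i;s_i)\<close> shifts the \<open>i\<close>-th arm and
  leaves the entry \<open>r - |\<mu>^i|\<close> at \<open>(i;s_i)\<close>. Hence \<open>r \<ge> |\<mu>^i|\<close>.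
\<close>

lemma nedges_sym: "nedges a b = nedges b a"
  by (cases a; cases b) auto

lemma cartan_sym: "cartan a b = cartan b a"
  by (simp add: cartan_def nedges_sym eq_commute)

lemma cartan_distinct_cases: "a \<noteq> b \<Longrightarrow> cartan a b = 0 \<or> cartan a b = -1"
  by (cases a; cases b) (auto simp: cartan_def)

lemma Lv_in_verts: "Lv l \<in> verts r k s \<longleftrightarrow> 1 \<le> l \<and> l \<le> r"
  unfolding verts_def by auto

lemma Av_in_verts: "Av i j \<in> verts r k s \<longleftrightarrow> 1 \<le> i \<and> i \<le> k \<and> j \<le> s i"
  unfolding verts_def by auto

lemma finite_verts: "finite (verts r k s)"
proof -
  have "verts r k s = Lv ` {1..r} \<union> (\<Union>i\<in>{1..k}. Av i ` {..s i})"
    unfolding verts_def by auto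
  then show ?thesis by simp
qed

definition nonneg :: "vec \<Rightarrow> bool" where
  "nonneg x \<longleftrightarrow> (\<forall>c. 0 \<le> x c)"

lemma nonneg_combination:
  "nonneg x \<Longrightarrow> nonneg y \<Longrightarrow> 0 \<le> p \<Longrightarrow> 0 \<le> q \<Longrightarrow> nonneg (\<lambda>c. p * x c + q * y c)"
  by (simp add: nonneg_def)

context
  fixes r k :: nat and s :: "nat \<Rightarrow> nat"
begin

lemma bform_sym: "bform r k s x y = bform r k s y x"
  unfolding bform_def by (subst sum.swap) (simp add: cartan_sym mult_ac)

lemma bform_linear:
  "bform r k s (\<lambda>c. p * y c + q * z c) x = p * bform r k s y x + q * bform r k s z x"
  unfolding bform_def by (simp add: algebra_simps sum.distrib sum_distrib_left)

lemma bform_evec: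
  assumes "a \<in> verts r k s"
  shows "bform r k s x (evec a) = (\<Sum>c\<in>verts r k s. x c * cartan c a)"
proof -
  have "(\<Sum>b\<in>verts r k s. x c * evec a b * cartan c b)
      = (\<Sum>b\<in>verts r k s. if b = a then x c * cartan c a else 0)" for c
    by (rule sum.cong) (auto simp: evec_def)
  then have "(\<Sum>b\<in>verts r k s. x c * evec a b * cartan c b) = x c * cartan c a" for c
    using assms finite_verts by simp
  then show ?thesis unfolding bform_def by simp
qed

lemma bform_evec_evec:
  assumes "a \<in> verts r k s" "b \<in> verts r k s"
  shows "bform r k s (evec a) (evec b) = cartan a b"
proof -
  have "bform r k s (evec a) (evec b) = (\<Sum>c\<in>verts r k s. if c = a then cartan a b else 0)"
    unfolding bform_evec[OF assms(2)] by (rule sum.cong) (auto simp: evec_def)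
  then show ?thesis using assms finite_verts by simp
qed

lemma sref_linear:
  "sref r k s a (\<lambda>c. p * y c + q * z c) = (\<lambda>c. p * sref r k s a y c + q * sref r k s a z c)"
  unfolding sref_def by (simp add: bform_linear algebra_simps)

lemma sref_evec:
  "a \<in> verts r k s \<Longrightarrow> d \<in> verts r k s \<Longrightarrow>
   sref r k s d (evec a) = (\<lambda>c. evec a c - cartan a d * evec d c)"
  unfolding sref_def by (simp add: bform_evec_evec)

lemma bform_sub_evec:
  assumes "a \<in> verts r k s" "d \<in> verts r k s"
  shows "bform r k s (\<lambda>c. x c - t * evec d c) (evec a) = bform r k s x (evec a) - t * cartan d a"
  using bform_linear[of 1 x "- t" "evec d" "evec a"] assms by (simp add: bform_evec_evec)

lemma sref_sref [simp]: "a \<in> verts r k s \<Longrightarrow> sref r k s a (sref r k s a x) = x"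
  unfolding sref_def by (simp add: bform_sub_evec cartan_def)

lemma sref_commute:
  "a \<in> verts r k s \<Longrightarrow> b \<in> verts r k s \<Longrightarrow> cartan a b = 0 \<Longrightarrow>
   sref r k s a (sref r k s b x) = sref r k s b (sref r k s a x)"
  unfolding sref_def by (simp add: bform_sub_evec cartan_sym[of b a]) (simp add: algebra_simps)

lemma sref_braid:
  "a \<in> verts r k s \<Longrightarrow> b \<in> verts r k s \<Longrightarrow> cartan a b = -1 \<Longrightarrow>
   sref r k s a (sref r k s b (sref r k s a x)) = sref r k s b (sref r k s a (sref r k s b x))"
  unfolding sref_def
  by (simp add: bform_sub_evec cartan_sym[of b a] cartan_def[of a a] cartan_def[of b b])
    (simp add: algebra_simps fun_eq_iff)

end

context
  fixes r k :: nat and s :: "nat \<Rightarrow> nat"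
begin

primrec rword :: "vert list \<Rightarrow> vec \<Rightarrow> vec" where
  "rword [] = id"
| "rword (a # u) = sref r k s a \<circ> rword u"

lemma rword_append: "rword (u @ u') = rword u \<circ> rword u'"
  by (induction u) auto

lemma rword_linear: "rword u (\<lambda>c. p * y c + q * z c) = (\<lambda>c. p * rword u y c + q * rword u z c)"
  by (induction u) (auto simp: sref_linear)

lemma weyl_iff_rword: "weyl r k s w \<longleftrightarrow> (\<exists>u. set u \<subseteq> verts r k s \<and> rword u = w)"
proof
  show "weyl r k s w \<Longrightarrow> \<exists>u. set u \<subseteq> verts r k s \<and> rword u = w"
  proof (induction rule: weyl.induct)
    case weyl_id
    show ?case by (intro exI[of _ "[]"]) simp
  next
    case (weyl_step w a)
    then show ?case by (metis insert_subset list.set(2) rword.simps(2))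
  qed
  show "\<exists>u. set u \<subseteq> verts r k s \<and> rword u = w \<Longrightarrow> weyl r k s w"
  proof (elim exE conjE)
    fix u assume "set u \<subseteq> verts r k s" "rword u = w"
    then show "weyl r k s w"
      by (induction u arbitrary: w) (auto intro: weyl.intros)
  qed
qed

lemma weyl_rword: "set u \<subseteq> verts r k s \<Longrightarrow> weyl r k s (rword u)"
  by (auto simp: weyl_iff_rword)

lemma weyl_comp: "weyl r k s w \<Longrightarrow> weyl r k s w' \<Longrightarrow> weyl r k s (w \<circ> w')"
  unfolding weyl_iff_rword by (metis le_sup_iff rword_append set_append)

lemma weyl_comp_sref: "weyl r k s w \<Longrightarrow> a \<in> verts r k s \<Longrightarrow> weyl r k s (w \<circ> sref r k s a)"
  using weyl_comp[of w "rword [a]"] weyl_rword[of "[a]"] by simp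

lemma weyl_linear:
  "weyl r k s w \<Longrightarrow> w (\<lambda>c. p * y c + q * z c) = (\<lambda>c. p * w y c + q * w z c)"
  by (auto simp: weyl_iff_rword rword_linear)

text \<open>Only meaningful on \<open>weyl r k s\<close>; elsewhere it is \<open>LEAST\<close> of an empty set.\<close>

definition wlength :: "(vec \<Rightarrow> vec) \<Rightarrow> nat" where
  "wlength w = (LEAST n. \<exists>u. set u \<subseteq> verts r k s \<and> length u = n \<and> rword u = w)"

lemma wlength_rword_le: "set u \<subseteq> verts r k s \<Longrightarrow> wlength (rword u) \<le> length u"
  unfolding wlength_def by (rule Least_le) auto

lemma reduced_word_exists:
  "weyl r k s w \<Longrightarrow> \<exists>u. set u \<subseteq> verts r k s \<and> length u = wlength w \<and> rword u = w"
  unfolding wlength_def weyl_iff_rword by (rule LeastI_ex) auto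

lemma wlength_comp_rword:
  assumes "weyl r k s w" "set u \<subseteq> verts r k s"
  shows "wlength (w \<circ> rword u) \<le> wlength w + length u"
proof -
  obtain u0 where u0: "set u0 \<subseteq> verts r k s" "length u0 = wlength w" "rword u0 = w"
    using reduced_word_exists[OF assms(1)] by blast
  have "wlength (w \<circ> rword u) = wlength (rword (u0 @ u))"
    using u0 by (simp add: rword_append)
  also have "\<dots> \<le> length (u0 @ u)"
    using u0 assms by (intro wlength_rword_le) auto
  finally show ?thesis using u0 by simp
qed

lemma wlength_comp_sref:
  "weyl r k s w \<Longrightarrow> a \<in> verts r k s \<Longrightarrow> wlength (w \<circ> sref r k s a) \<le> Suc (wlength w)"
  using wlength_comp_rword[of w "[a]"] by simp

lemma wlength_le_comp_sref:
  assumes "weyl r k s w" "a \<in> verts r k s"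
  shows "wlength w \<le> Suc (wlength (w \<circ> sref r k s a))"
proof -
  have "wlength w = wlength ((w \<circ> sref r k s a) \<circ> sref r k s a)"
    using assms(2) by (simp add: comp_def)
  also have "\<dots> \<le> Suc (wlength (w \<circ> sref r k s a))"
    using assms by (intro wlength_comp_sref weyl_comp_sref)
  finally show ?thesis .
qed

lemma wlength_eq_0: "weyl r k s w \<Longrightarrow> wlength w = 0 \<Longrightarrow> w = id"
  using reduced_word_exists[of w] by auto

lemma wlength_SucE:
  assumes "weyl r k s w" "wlength w = Suc m"
  obtains w' b where "weyl r k s w'" "b \<in> verts r k s" "w = w' \<circ> sref r k s b" "wlength w' = m"
proof -
  obtain u where u: "set u \<subseteq> verts r k s" "length u = Suc m" "rword u = w"
    using reduced_word_exists[OF assms(1)] assms(2) by auto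
  then obtain u' b where ub: "u = u' @ [b]" by (metis length_Suc_conv_rev)
  have w': "weyl r k s (rword u')" and b: "b \<in> verts r k s" using u ub by (auto intro: weyl_rword)
  have w: "w = rword u' \<circ> sref r k s b" using u ub by (simp add: rword_append)
  have "wlength (rword u') \<le> m" using wlength_rword_le[of u'] u ub by auto
  moreover have "Suc m \<le> Suc (wlength (rword u'))" using wlength_comp_sref[OF w' b] w assms(2) by simp
  ultimately show ?thesis using that w' b w by simp
qed

end

context
  fixes r k :: nat and s :: "nat \<Rightarrow> nat"
begin

lemma rword_normal_form:
  assumes "[] \<in> C"
    and closed: "\<And>x c. x \<in> A \<Longrightarrow> c \<in> C \<Longrightarrow>
      \<exists>c'\<in>C. sref r k s x \<circ> rword r k s c = rword r k s c' \<and> length c' \<le> Suc (length c)"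
  shows "set u \<subseteq> A \<Longrightarrow> \<exists>c\<in>C. rword r k s u = rword r k s c \<and> length c \<le> length u"
proof (induction u)
  case Nil
  then show ?case using assms(1) by auto
next
  case (Cons x u)
  then obtain c where c: "c \<in> C" "rword r k s u = rword r k s c" "length c \<le> length u"
    by auto
  obtain c' where "c' \<in> C" "sref r k s x \<circ> rword r k s c = rword r k s c'" "length c' \<le> Suc (length c)"
    using closed[of x c] Cons.prems c(1) by auto
  then show ?case using c by (intro bexI[of _ c']) auto
qed

lemma commuting_words_closed:
  assumes "a \<in> verts r k s" "b \<in> verts r k s" "cartan a b = 0" "x \<in> {a, b}" "c \<in> {[], [a], [b], [a, b]}"
  shows "\<exists>c'\<in>{[], [a], [b], [a, b]}.
    sref r k s x \<circ> rword r k s c = rword r k s c' \<and> length c' \<le> Suc (length c)"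
proof -
  have "sref r k s b (sref r k s a y) = sref r k s a (sref r k s b y)" for y
    using sref_commute[OF assms(1-3)] by simp
  then show ?thesis using assms(1,2,4,5) by (auto simp: fun_eq_iff)
qed

lemma braid_words_closed:
  assumes "a \<in> verts r k s" "b \<in> verts r k s" "cartan a b = -1" "x \<in> {a, b}"
    "c \<in> {[], [a], [b], [a, b], [b, a], [a, b, a]}"
  shows "\<exists>c'\<in>{[], [a], [b], [a, b], [b, a], [a, b, a]}.
    sref r k s x \<circ> rword r k s c = rword r k s c' \<and> length c' \<le> Suc (length c)"
proof -
  have "sref r k s b (sref r k s a (sref r k s b y)) = sref r k s a (sref r k s b (sref r k s a y))" for y
    using sref_braid[OF assms(1-3)] by simp
  then show ?thesis using assms(1,2,4,5) by (auto simp: fun_eq_iff)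
qed

lemma rank_two_dichotomy:
  assumes V: "a \<in> verts r k s" "b \<in> verts r k s" "a \<noteq> b" and u: "set u \<subseteq> {a, b}"
  shows "(\<exists>p q. 0 \<le> p \<and> 0 \<le> q \<and> rword r k s u (evec a) = (\<lambda>c. p * evec a c + q * evec b c))
    \<or> (\<exists>u'. set u' \<subseteq> {a, b} \<and> length u' < length u \<and> rword r k s u' = rword r k s u \<circ> sref r k s a)"
proof -
  have shorter: "\<exists>u'. set u' \<subseteq> {a, b} \<and> length u' < length u \<and> rword r k s u' = rword r k s u \<circ> sref r k s a"
    if "set c' \<subseteq> {a, b}" "length c' < length c" "length c \<le> length u"
      "rword r k s c' = rword r k s c \<circ> sref r k s a" "rword r k s u = rword r k s c" for c c'
    using that by (intro exI[of _ c']) auto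
  have s_a_twice: "sref r k s a (sref r k s a y) = y" for y using V by simp
  consider "cartan a b = 0" | "cartan a b = -1" using cartan_distinct_cases[OF V(3)] by blast
  then show ?thesis
  proof cases
    case 1
    have commute: "sref r k s a (sref r k s b y) = sref r k s b (sref r k s a y)" for y
      using sref_commute[OF V(1,2) 1] by simp
    obtain c where c: "c \<in> {[], [a], [b], [a, b]}" "rword r k s u = rword r k s c" "length c \<le> length u"
      using rword_normal_form[OF _ commuting_words_closed[OF V(1,2) 1] u] by blast
    then consider "c = []" | "c = [b]" | "c = [a]" | "c = [a, b]" by blast
    then show ?thesis
    proof cases
      case 1 with c show ?thesis by (intro disjI1 exI[of _ 1] exI[of _ 0]) simp
    next
      case 2 with c V \<open>cartan a b = 0\<close> show ?thesis
        by (intro disjI1 exI[of _ 1] exI[of _ 0]) (simp add: sref_evec)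
    next
      case 3 with c show ?thesis
        by (intro disjI2 shorter[of "[]" c]) (auto simp: fun_eq_iff s_a_twice)
    next
      case 4 with c show ?thesis
        by (intro disjI2 shorter[of "[b]" c]) (auto simp: fun_eq_iff s_a_twice commute)
    qed
  next
    case 2
    obtain c where c: "c \<in> {[], [a], [b], [a, b], [b, a], [a, b, a]}" "rword r k s u = rword r k s c"
      "length c \<le> length u"
      using rword_normal_form[OF _ braid_words_closed[OF V(1,2) 2] u] by blast
    then consider "c = []" | "c = [b]" | "c = [a, b]" | "c = [a]" | "c = [b, a]" | "c = [a, b, a]"
      by blast
    then show ?thesis
    proof cases
      case 1 with c show ?thesis by (intro disjI1 exI[of _ 1] exI[of _ 0]) simp
    next
      case 2 with c V \<open>cartan a b = -1\<close> show ?thesis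
        by (intro disjI1 exI[of _ 1] exI[of _ 1]) (simp add: sref_evec)
    next
      case 3
      have "rword r k s u (evec a) = sref r k s a (\<lambda>c. 1 * evec a c + 1 * evec b c)"
        using 3 c V \<open>cartan a b = -1\<close> by (simp add: sref_evec)
      also have "\<dots> = (\<lambda>c. 0 * evec a c + 1 * evec b c)"
        unfolding sref_linear using V \<open>cartan a b = -1\<close>
        by (simp add: sref_evec cartan_sym[of b a] cartan_def[of a a] fun_eq_iff)
      finally show ?thesis by (intro disjI1 exI[of _ 0] exI[of _ 1]) auto
    next
      case 4 with c show ?thesis
        by (intro disjI2 shorter[of "[]" c]) (auto simp: fun_eq_iff s_a_twice)
    next
      case 5 with c show ?thesis
        by (intro disjI2 shorter[of "[b]" c]) (auto simp: fun_eq_iff s_a_twice)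
    next
      case 6 with c show ?thesis
        by (intro disjI2 shorter[of "[a, b]" c]) (auto simp: fun_eq_iff s_a_twice)
    qed
  qed
qed

lemma rank_two_coset_factorization:
  assumes "weyl r k s w0" "set u0 \<subseteq> {a, b}" "{a, b} \<subseteq> verts r k s"
    and "wlength r k s (w0 \<circ> rword r k s u0) = wlength r k s w0 + length u0"
  shows "\<exists>v u. weyl r k s v \<and> set u \<subseteq> {a, b} \<and> v \<circ> rword r k s u = w0 \<circ> rword r k s u0
    \<and> wlength r k s (w0 \<circ> rword r k s u0) = wlength r k s v + length u
    \<and> wlength r k s v \<le> wlength r k s w0
    \<and> (\<forall>d\<in>{a, b}. wlength r k s v \<le> wlength r k s (v \<circ> sref r k s d))"
  using assms
proof (induction "wlength r k s w0" arbitrary: w0 u0 rule: less_induct)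
  case less
  show ?case
  proof (cases "\<forall>d\<in>{a, b}. wlength r k s w0 \<le> wlength r k s (w0 \<circ> sref r k s d)")
    case True
    with less.prems show ?thesis by blast
  next
    case False
    then obtain d where d: "d \<in> {a, b}" and shorter: "wlength r k s (w0 \<circ> sref r k s d) < wlength r k s w0"
      by (auto simp: not_le)
    have dV: "d \<in> verts r k s" using d less.prems(3) by auto
    let ?w1 = "w0 \<circ> sref r k s d"
    have w1: "weyl r k s ?w1" using less.prems(1) dV by (rule weyl_comp_sref)
    have same: "?w1 \<circ> rword r k s (d # u0) = w0 \<circ> rword r k s u0"
      using dV by (simp add: fun_eq_iff)
    have "wlength r k s w0 \<le> Suc (wlength r k s ?w1)"
      using less.prems(1) dV by (rule wlength_le_comp_sref)
    moreover have "wlength r k s (w0 \<circ> rword r k s u0) \<le> wlength r k s ?w1 + length (d # u0)"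
      using wlength_comp_rword[OF w1, of "d # u0"] same dV less.prems(2,3) by auto
    ultimately have "wlength r k s (?w1 \<circ> rword r k s (d # u0)) = wlength r k s ?w1 + length (d # u0)"
      using shorter less.prems(4) same by simp
    then show ?thesis
      using less.hyps[OF shorter w1, of "d # u0"] same shorter d less.prems(2,3) by fastforce
  qed
qed

text \<open>
  If \<open>s_b\<close> is a right descent of \<open>w\<close>, write \<open>w = v u\<close> with \<open>u\<close> in \<open>\<langle>s_a, s_b\<rangle>\<close> and \<open>v\<close> of
  minimal length in its coset. By induction \<open>v(e_a), v(e_b) \<ge> 0\<close>, and \<open>u(e_a)\<close> is a nonnegative
  combination of \<open>e_a, e_b\<close> unless \<open>u\<close>, hence \<open>w\<close>, gets shorter by \<open>s_a\<close>.
\<close>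

theorem weyl_evec_nonneg:
  assumes "weyl r k s w" "a \<in> verts r k s" "wlength r k s w \<le> wlength r k s (w \<circ> sref r k s a)"
  shows "nonneg (w (evec a))"
  using assms
proof (induction "wlength r k s w" arbitrary: w a rule: less_induct)
  case less
  show ?case
  proof (cases "wlength r k s w")
    case 0
    then have "w = id" using wlength_eq_0 less.prems(1) by blast
    then show ?thesis by (simp add: nonneg_def evec_def)
  next
    case (Suc m)
    then obtain w0 b where w0: "weyl r k s w0" "b \<in> verts r k s" "w = w0 \<circ> sref r k s b"
      "wlength r k s w0 = m"
      using wlength_SucE less.prems(1) by metis
    have "w \<circ> sref r k s b = w0" using w0 by (simp add: fun_eq_iff)
    then have "a \<noteq> b" using less.prems(3) Suc w0(4) by auto
    have ab: "{a, b} \<subseteq> verts r k s" using less.prems(2) w0(2) by simp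
    obtain v u where v: "weyl r k s v" "set u \<subseteq> {a, b}" "v \<circ> rword r k s u = w"
      "wlength r k s w = wlength r k s v + length u" "wlength r k s v \<le> m"
      "\<forall>d\<in>{a, b}. wlength r k s v \<le> wlength r k s (v \<circ> sref r k s d)"
      using rank_two_coset_factorization[OF w0(1), of "[b]" a b] ab w0 Suc by auto
    have "wlength r k s v < wlength r k s w" using v(5) Suc by simp
    then have va: "nonneg (v (evec a))" and vb: "nonneg (v (evec b))"
      using less.hyps v(1,6) ab by auto
    from rank_two_dichotomy[OF less.prems(2) w0(2) \<open>a \<noteq> b\<close> v(2)] show ?thesis
    proof (elim disjE exE conjE)
      fix p q :: int
      assume "0 \<le> p" "0 \<le> q" and u_evec: "rword r k s u (evec a) = (\<lambda>c. p * evec a c + q * evec b c)"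
      have "w (evec a) = (\<lambda>c. p * v (evec a) c + q * v (evec b) c)"
        using v(3) weyl_linear[OF v(1)] u_evec by auto
      then show ?thesis using nonneg_combination[OF va vb \<open>0 \<le> p\<close> \<open>0 \<le> q\<close>] by simp
    next
      fix u'
      assume u': "set u' \<subseteq> {a, b}" "length u' < length u" "rword r k s u' = rword r k s u \<circ> sref r k s a"
      have "w \<circ> sref r k s a = v \<circ> rword r k s u'" by (simp add: v(3)[symmetric] u'(3) comp_assoc)
      then have "wlength r k s (w \<circ> sref r k s a) \<le> wlength r k s v + length u'"
        using wlength_comp_rword[OF v(1)] u'(1) ab by auto
      then show ?thesis using u'(2) v(4) less.prems(3) by simp
    qed
  qed
qed

theorem weyl_image_nonneg:
  assumes "weyl r k s w" "nonneg \<delta>" "\<forall>a\<in>verts r k s. bform r k s (evec a) \<delta> \<le> 0"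
  shows "nonneg (w \<delta>)"
  using assms(1)
proof (induction "wlength r k s w" arbitrary: w)
  case 0
  then have "w = id" using wlength_eq_0 by metis
  then show ?case using assms(2) by simp
next
  case (Suc m)
  then obtain w0 b where w0: "weyl r k s w0" "b \<in> verts r k s" "w = w0 \<circ> sref r k s b"
    "wlength r k s w0 = m"
    using wlength_SucE by metis
  define t where "t = - bform r k s \<delta> (evec b)"
  have "bform r k s \<delta> (evec b) \<le> 0"
    using assms(3) w0(2) bform_sym by metis
  then have "0 \<le> t" by (simp add: t_def)
  have "sref r k s b \<delta> = (\<lambda>c. 1 * \<delta> c + t * evec b c)"
    by (simp add: sref_def t_def)
  then have "w \<delta> = w0 (\<lambda>c. 1 * \<delta> c + t * evec b c)"
    using w0(3) by simp
  also have "\<dots> = (\<lambda>c. 1 * w0 \<delta> c + t * w0 (evec b) c)"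
    using w0(1) by (rule weyl_linear)
  finally have "w \<delta> = (\<lambda>c. 1 * w0 \<delta> c + t * w0 (evec b) c)" .
  moreover have "nonneg (w0 \<delta>)"
    using Suc.hyps(1) w0(1,4) by blast
  moreover have "wlength r k s w0 \<le> wlength r k s (w0 \<circ> sref r k s b)"
    using Suc.hyps(2) w0(3,4) by simp
  then have "nonneg (w0 (evec b))"
    using weyl_evec_nonneg[OF w0(1,2)] by blast
  ultimately show ?case using nonneg_combination[of _ _ 1 t] \<open>0 \<le> t\<close> by simp
qed

lemma imaginary_root_sign:
  assumes "imaginary_root r k s v"
  shows "(\<forall>u. weyl r k s u \<longrightarrow> nonneg (u v)) \<or> (\<forall>u. weyl r k s u \<longrightarrow> nonneg (\<lambda>c. - u v c))"
proof -
  obtain w \<delta> where w: "weyl r k s w" and \<delta>: "fund_imag r k s \<delta>"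
    and v: "v = w \<delta> \<or> v = (\<lambda>c. - w \<delta> c)"
    using assms unfolding imaginary_root_def by blast
  have "nonneg \<delta>" "\<forall>a\<in>verts r k s. bform r k s (evec a) \<delta> \<le> 0"
    using \<delta> unfolding fund_imag_def nonneg_def by auto
  then have pos: "nonneg (u (w \<delta>))" if "weyl r k s u" for u
    using weyl_image_nonneg[OF weyl_comp[OF that w]] by simp
  have neg: "u (\<lambda>c. - w \<delta> c) = (\<lambda>c. - u (w \<delta>) c)" if "weyl r k s u" for u
    using weyl_linear[OF that, of "-1" "w \<delta>" 0 "w \<delta>"] by simp
  from v show ?thesis
  proof
    assume "v = w \<delta>"
    then show ?thesis using pos by blast
  next
    assume "v = (\<lambda>c. - w \<delta> c)"
    then show ?thesis using pos neg by (simp add: nonneg_def)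
  qed
qed

lemma cartan_Av:
  assumes "c \<in> verts r k s"
  shows "cartan c (Av i j) = (if c = Av i j then 2 else 0) - (if j = 0 \<and> c \<in> Lv ` {1..r} then 1 else 0)
     - (if j \<noteq> 0 \<and> c = Av i (j - 1) then 1 else 0) - (if c = Av i (Suc j) then 1 else 0)"
proof (cases c)
  case (Lv l)
  then have "l \<in> {1..r}" using assms by (simp add: Lv_in_verts)
  then show ?thesis using Lv by (simp add: cartan_def image_iff)
next
  case (Av i' j')
  have nl: "Av i' j' \<notin> Lv ` {1..r}" by auto
  have e1: "(j \<noteq> 0 \<and> Av i' j' = Av i (j - 1)) = (i' = i \<and> j = Suc j')" by auto
  show ?thesis unfolding Av cartan_def using nl e1
    by (simp only: nedges.simps vert.inject) auto
qed

lemma bform_evec_arm: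
  assumes i: "1 \<le> i" "i \<le> k" and j: "j \<le> s i"
  shows "bform r k s x (evec (Av i j)) = 2 * x (Av i j)
     - (if j = 0 then (\<Sum>l=1..r. x (Lv l)) else x (Av i (j - 1)))
     - (if Suc j \<le> s i then x (Av i (Suc j)) else 0)"
proof -
  let ?V = "verts r k s"
  have fin: "finite ?V" by (rule finite_verts)
  have aV: "Av i j \<in> ?V" using i j by (simp add: Av_in_verts)
  have "bform r k s x (evec (Av i j)) = (\<Sum>c\<in>?V. x c * cartan c (Av i j))"
    by (rule bform_evec[OF aV])
  also have "\<dots> = (\<Sum>c\<in>?V. (if c = Av i j then 2 * x c else 0) - (if j = 0 \<and> c \<in> Lv ` {1..r} then x c else 0)
     - (if j \<noteq> 0 \<and> c = Av i (j - 1) then x c else 0) - (if c = Av i (Suc j) then x c else 0))"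
    by (rule sum.cong) (auto simp: cartan_Av algebra_simps)
  also have "\<dots> = (\<Sum>c\<in>?V. if c = Av i j then 2 * x c else 0) - (\<Sum>c\<in>?V. if j = 0 \<and> c \<in> Lv ` {1..r} then x c else 0)
     - (\<Sum>c\<in>?V. if j \<noteq> 0 \<and> c = Av i (j - 1) then x c else 0) - (\<Sum>c\<in>?V. if c = Av i (Suc j) then x c else 0)"
    by (simp add: sum_subtractf)
  also have "(\<Sum>c\<in>?V. if c = Av i j then 2 * x c else 0) = 2 * x (Av i j)"
    using fin aV by simp
  also have "(\<Sum>c\<in>?V. if j = 0 \<and> c \<in> Lv ` {1..r} then x c else 0) = (if j = 0 then (\<Sum>l=1..r. x (Lv l)) else 0)"
  proof (cases "j = 0")
    case True
    have sub: "Lv ` {1..r} \<subseteq> ?V" by (auto simp: Lv_in_verts)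
    have "(\<Sum>c\<in>?V. if c \<in> Lv ` {1..r} then x c else 0) = (\<Sum>c\<in>?V \<inter> Lv ` {1..r}. x c)"
      using fin by (simp add: sum.inter_restrict)
    also have "?V \<inter> Lv ` {1..r} = Lv ` {1..r}" using sub by auto
    also have "(\<Sum>c\<in>Lv ` {1..r}. x c) = (\<Sum>l=1..r. x (Lv l))"
      by (subst sum.reindex) (auto simp: inj_on_def)
    finally show ?thesis using True by simp
  qed simp
  also have "(\<Sum>c\<in>?V. if j \<noteq> 0 \<and> c = Av i (j - 1) then x c else 0) = (if j \<noteq> 0 then x (Av i (j - 1)) else 0)"
  proof (cases "j = 0")
    case False
    have "Av i (j - 1) \<in> ?V" using i j by (simp add: Av_in_verts)
    then show ?thesis using fin False by simp
  qed simp
  also have "(\<Sum>c\<in>?V. if c = Av i (Suc j) then x c else 0) = (if Suc j \<le> s i then x (Av i (Suc j)) else 0)"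
    using fin i by (simp add: Av_in_verts)
  finally show ?thesis by simp
qed

primrec arm_word :: "nat \<Rightarrow> nat \<Rightarrow> vert list" where
  "arm_word i 0 = []"
| "arm_word i (Suc j) = Av i j # arm_word i j"

lemma arm_word_set: "1 \<le> i \<Longrightarrow> i \<le> k \<Longrightarrow> j \<le> Suc (s i) \<Longrightarrow> set (arm_word i j) \<subseteq> verts r k s"
  by (induction j) (auto simp: Av_in_verts)

lemma arm_word_apply:
  assumes i: "1 \<le> i" "i \<le> k"
    and x_Lv: "\<And>l. 1 \<le> l \<Longrightarrow> l \<le> r \<Longrightarrow> x (Lv l) = 1"
    and x_beyond: "\<And>t. s i < t \<Longrightarrow> x (Av i t) = 0"
  shows "j \<le> Suc (s i) \<Longrightarrow>
    (\<forall>t<j. rword r k s (arm_word i j) x (Av i t) = int r + x (Av i (Suc t)) - x (Av i 0))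
    \<and> (\<forall>c. (\<forall>t<j. c \<noteq> Av i t) \<longrightarrow> rword r k s (arm_word i j) x c = x c)"
proof (induction j)
  case 0
  then show ?case by simp
next
  case (Suc j)
  let ?y = "rword r k s (arm_word i j) x"
  have shifted: "\<forall>t<j. ?y (Av i t) = int r + x (Av i (Suc t)) - x (Av i 0)"
    and fixed: "\<forall>c. (\<forall>t<j. c \<noteq> Av i t) \<longrightarrow> ?y c = x c"
    using Suc by auto
  have j: "j \<le> s i" using Suc.prems by simp
  have step: "rword r k s (arm_word i (Suc j)) x = sref r k s (Av i j) ?y" by simp
  have y_j: "?y (Av i j) = x (Av i j)" using fixed by auto
  have y_Lv: "(\<Sum>l=1..r. ?y (Lv l)) = int r"
  proof -
    have "(\<Sum>l=1..r. ?y (Lv l)) = (\<Sum>l=1..r. (1::int))"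
      by (rule sum.cong) (use fixed x_Lv in auto)
    then show ?thesis by simp
  qed
  have y_next: "(if Suc j \<le> s i then ?y (Av i (Suc j)) else 0) = x (Av i (Suc j))"
    using fixed x_beyond by auto
  have y_prev: "j = Suc j' \<Longrightarrow> ?y (Av i j') = int r + x (Av i j) - x (Av i 0)" for j'
    using shifted by auto
  have coeff: "bform r k s ?y (evec (Av i j)) = 2 * x (Av i j)
     - (if j = 0 then int r else int r + x (Av i j) - x (Av i 0)) - x (Av i (Suc j))"
    using bform_evec_arm[OF i j, of ?y] y_j y_Lv y_next y_prev
    by (cases j) simp_all
  show ?case
  proof (intro conjI allI impI)
    fix t assume "t < Suc j"
    then consider "t = j" | "t < j" by linarith
    then show "rword r k s (arm_word i (Suc j)) x (Av i t) = int r + x (Av i (Suc t)) - x (Av i 0)"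
    proof cases
      case 1
      then show ?thesis using coeff y_j unfolding step sref_def by (cases j) (auto simp: evec_def)
    next
      case 2
      then show ?thesis using shifted unfolding step sref_def by (simp add: evec_def)
    qed
  next
    fix c assume "\<forall>t<Suc j. c \<noteq> Av i t"
    then show "rword r k s (arm_word i (Suc j)) x c = x c"
      using fixed unfolding step sref_def by (simp add: evec_def)
  qed
qed

end

theorem corollary2p8:
  fixes r k :: nat and s :: "nat \<Rightarrow> nat" and mu :: "nat \<Rightarrow> nat \<Rightarrow> nat"
  assumes "is_partition_tuple k s mu"
    and "imaginary_root r k s (vmu r k s mu)"
  shows "\<forall>i. 1 \<le> i \<and> i \<le> k \<longrightarrow> psize mu s i \<le> r"
proof (intro allI impI)
  fix i assume i: "1 \<le> i \<and> i \<le> k"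
  let ?v = "vmu r k s mu" and ?u = "arm_word i (Suc (s i))"
  have "rword r k s ?u ?v (Av i (s i)) = int r + ?v (Av i (Suc (s i))) - ?v (Av i 0)"
    using arm_word_apply[of i k r ?v s "Suc (s i)"] i
    by (auto simp: vmu_def Lv_in_verts Av_in_verts)
  also have "\<dots> = int r - int (psize mu s i)"
    using i by (simp add: vmu_def Av_in_verts)
  finally have u_v: "rword r k s ?u ?v (Av i (s i)) = int r - int (psize mu s i)" .
  have u: "weyl r k s (rword r k s ?u)"
    using i by (intro weyl_rword arm_word_set) auto
  have v: "?v (Av i 0) = int (psize mu s i)"
    using i by (simp add: vmu_def Av_in_verts)
  from imaginary_root_sign[OF assms(2)] show "psize mu s i \<le> r"
  proof
    assume "\<forall>u. weyl r k s u \<longrightarrow> nonneg (u ?v)"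
    then have "0 \<le> rword r k s ?u ?v (Av i (s i))" using u unfolding nonneg_def by blast
    then show ?thesis using u_v by simp
  next
    assume "\<forall>u. weyl r k s u \<longrightarrow> nonneg (\<lambda>c. - u ?v c)"
    then have "0 \<le> - ?v (Av i 0)" using weyl_id by (fastforce simp: nonneg_def)
    then show ?thesis using v by simp
  qed
qed

end
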